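(* Let $G$ be a graph and let $H = K_1 + G$ be the join of a single new node with $G$ (the new node adjacent to every node of $G$). If $H$ is non-graceful, then $G$ is non-supergraceful.
   Context: Graphs are finite, simple. A graceful labeling of a graph with $q$ edges is an injective map $\varphi: V \to \{0,\dots,q\}$ whose induced edge labels $|\varphi(u)-\varphi(v)|$ are pairwise distinct; a graph is graceful if it has one, non-graceful otherwise. For a graph $G$ with $p$ nodes and $q$ edges, a total labeling is a map $\varphi: V(G) \to \{1,\dots,p+q\}$ such that the $p$ node labels $\varphi(u)$ and the $q$ edge labels $|\varphi(u)-\varphi(v)|$, $uv \in E(G)$, are all pairwise distinct, so that together they form exactly $\{1,\dots,p+q\}$. $G$ is supergraceful if it admits a total labeling, and non-supergraceful otherwise. *)

theory Defs
  imports Main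
begin

definition simple_graph :: "'a set \<Rightarrow> 'a set set \<Rightarrow> bool" where
  "simple_graph V E \<longleftrightarrow> finite V \<and>
     (\<forall>e\<in>E. \<exists>u v. u \<in> V \<and> v \<in> V \<and> u \<noteq> v \<and> e = {u, v})"

definition edge_labels_distinct :: "'a set set \<Rightarrow> ('a \<Rightarrow> int) \<Rightarrow> bool" where
  "edge_labels_distinct E \<phi> \<longleftrightarrow>
     (\<forall>u v x y. {u, v} \<in> E \<longrightarrow> {x, y} \<in> E \<longrightarrow> {u, v} \<noteq> {x, y} \<longrightarrow>
        \<bar>\<phi> u - \<phi> v\<bar> \<noteq> \<bar>\<phi> x - \<phi> y\<bar>)"

definition edge_label_set :: "'a set set \<Rightarrow> ('a \<Rightarrow> int) \<Rightarrow> int set" where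
  "edge_label_set E \<phi> = {\<bar>\<phi> u - \<phi> v\<bar> | u v. {u, v} \<in> E}"

definition graceful_labeling :: "'a set \<Rightarrow> 'a set set \<Rightarrow> ('a \<Rightarrow> int) \<Rightarrow> bool" where
  "graceful_labeling V E \<phi> \<longleftrightarrow>
     inj_on \<phi> V \<and> \<phi> ` V \<subseteq> {0 .. int (card E)} \<and> edge_labels_distinct E \<phi>"

definition graceful :: "'a set \<Rightarrow> 'a set set \<Rightarrow> bool" where
  "graceful V E \<longleftrightarrow> (\<exists>\<phi>. graceful_labeling V E \<phi>)"

definition total_labeling :: "'a set \<Rightarrow> 'a set set \<Rightarrow> ('a \<Rightarrow> int) \<Rightarrow> bool" where
  "total_labeling V E \<phi> \<longleftrightarrow>
     \<phi> ` V \<subseteq> {1 .. int (card V + card E)} \<and>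
     inj_on \<phi> V \<and> edge_labels_distinct E \<phi> \<and>
     \<phi> ` V \<inter> edge_label_set E \<phi> = {} \<and>
     \<phi> ` V \<union> edge_label_set E \<phi> = {1 .. int (card V + card E)}"

definition supergraceful :: "'a set \<Rightarrow> 'a set set \<Rightarrow> bool" where
  "supergraceful V E \<longleftrightarrow> (\<exists>\<phi>. total_labeling V E \<phi>)"

definition join_K1_nodes :: "'a set \<Rightarrow> 'a option set" where
  "join_K1_nodes V = insert None (Some ` V)"

definition join_K1_edges :: "'a set \<Rightarrow> 'a set set \<Rightarrow> 'a option set set" where
  "join_K1_edges V E = (image Some) ` E \<union> {{None, Some v} | v. v \<in> V}"

end

theory Submission
  imports Defs
begin

text \<open>Label the apex of \<open>K\<^sub>1 + G\<close> with 0 and keep a total labeling of \<open>G\<close> on the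
  remaining nodes. The spoke to \<open>v\<close> then carries the label of \<open>v\<close>, so the edge labels of
  \<open>K\<^sub>1 + G\<close> are the node and edge labels of \<open>G\<close>, which a total labeling makes pairwise
  distinct; they lie in \<open>{1..p+q}\<close>, and \<open>p + q\<close> is exactly the number of edges of
  \<open>K\<^sub>1 + G\<close>. Hence a total labeling of \<open>G\<close> yields a graceful labeling of \<open>K\<^sub>1 + G\<close>.\<close>

lemma abs_diff_doubleton_eq:
  fixes f :: "'a \<Rightarrow> 'b::ordered_ab_group_add_abs"
  assumes "{u, v} = {x, y}"
  shows "\<bar>f u - f v\<bar> = \<bar>f x - f y\<bar>"
  using assms by (metis doubleton_eq_iff abs_minus_commute)

lemma join_K1_edgeE:
  assumes "{u, v} \<in> join_K1_edges V E"
  obtains (inner) a b where "u = Some a" "v = Some b" "{a, b} \<in> E"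
    | (spoke) w where "w \<in> V" "{u, v} = {None, Some w}"
proof (cases "{u, v} \<in> image Some ` E")
  case True
  then obtain e where "e \<in> E" and e: "{u, v} = Some ` e" by blast
  then obtain a b where ab: "u = Some a" "v = Some b" by blast
  with e have "Some ` e = Some ` {a, b}" by auto
  then have "e = {a, b}" by (metis inj_Some inj_image_eq_iff)
  with ab \<open>e \<in> E\<close> show ?thesis by (auto intro: inner)
next
  case False
  with assms show ?thesis unfolding join_K1_edges_def by (auto intro: spoke)
qed

lemma card_join_K1_edges:
  assumes "simple_graph V E"
  shows "card (join_K1_edges V E) = card V + card E"
proof -
  have "finite V" and "E \<subseteq> Pow V"
    using assms unfolding simple_graph_def by auto
  then have "finite E" by (simp add: finite_subset)
  have spokes: "{{None, Some v} | v. v \<in> V} = (\<lambda>v. {None, Some v}) ` V" by auto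
  have "card (image Some ` E) = card E"
    by (rule card_image) (simp add: inj_on_def inj_image_eq_iff)
  moreover have "card ((\<lambda>v. {None, Some v}) ` V) = card V"
    by (rule card_image) (simp add: inj_on_def doubleton_eq_iff)
  moreover have "image Some ` E \<inter> (\<lambda>v. {None, Some v}) ` V = {}" by auto
  ultimately show ?thesis
    unfolding join_K1_edges_def spokes
    using \<open>finite E\<close> \<open>finite V\<close> by (simp add: card_Un_disjoint)
qed

lemma edge_labels_distinct_join_K1:
  assumes inj: "inj_on \<phi> V" and pos: "\<forall>w\<in>V. 0 < \<phi> w"
    and distinct: "edge_labels_distinct E \<phi>"
    and disjoint: "\<phi> ` V \<inter> edge_label_set E \<phi> = {}"
  shows "edge_labels_distinct (join_K1_edges V E) (case_option 0 \<phi>)"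
proof -
  let ?\<psi> = "case_option 0 \<phi>"
  have label_cases:
    "(\<exists>a b. {a, b} \<in> E \<and> {u, v} = {Some a, Some b} \<and> \<bar>?\<psi> u - ?\<psi> v\<bar> = \<bar>\<phi> a - \<phi> b\<bar>) \<or>
     (\<exists>w\<in>V. {u, v} = {None, Some w} \<and> \<bar>?\<psi> u - ?\<psi> v\<bar> = \<phi> w)"
    if "{u, v} \<in> join_K1_edges V E" for u v
    using that
  proof (cases rule: join_K1_edgeE)
    case (inner a b)
    then show ?thesis by auto
  next
    case (spoke w)
    then have "\<bar>?\<psi> u - ?\<psi> v\<bar> = \<phi> w"
      using abs_diff_doubleton_eq[of u v None "Some w" ?\<psi>] pos by fastforce
    with spoke show ?thesis by blast
  qed
  have inner_ne_node: "\<bar>\<phi> a - \<phi> b\<bar> \<noteq> \<phi> w" if "{a, b} \<in> E" "w \<in> V" for a b w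
  proof
    assume "\<bar>\<phi> a - \<phi> b\<bar> = \<phi> w"
    with that have "\<phi> w \<in> \<phi> ` V \<inter> edge_label_set E \<phi>"
      unfolding edge_label_set_def by force
    with disjoint show False by blast
  qed
  show ?thesis
    unfolding edge_labels_distinct_def
  proof (intro allI impI)
    fix u v x y
    assume uv: "{u, v} \<in> join_K1_edges V E" and xy: "{x, y} \<in> join_K1_edges V E"
      and ne: "{u, v} \<noteq> {x, y}"
    from label_cases[OF uv] label_cases[OF xy]
    show "\<bar>?\<psi> u - ?\<psi> v\<bar> \<noteq> \<bar>?\<psi> x - ?\<psi> y\<bar>"
    proof (elim disjE exE conjE bexE)
      fix a b c d
      assume "{a, b} \<in> E" "{u, v} = {Some a, Some b}" "\<bar>?\<psi> u - ?\<psi> v\<bar> = \<bar>\<phi> a - \<phi> b\<bar>"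
        and "{c, d} \<in> E" "{x, y} = {Some c, Some d}" "\<bar>?\<psi> x - ?\<psi> y\<bar> = \<bar>\<phi> c - \<phi> d\<bar>"
      moreover from this ne have "{a, b} \<noteq> {c, d}" by auto
      ultimately show ?thesis using distinct unfolding edge_labels_distinct_def by simp
    next
      fix w w'
      assume "w \<in> V" "{u, v} = {None, Some w}" "\<bar>?\<psi> u - ?\<psi> v\<bar> = \<phi> w"
        and "w' \<in> V" "{x, y} = {None, Some w'}" "\<bar>?\<psi> x - ?\<psi> y\<bar> = \<phi> w'"
      moreover from this ne have "w \<noteq> w'" by auto
      ultimately show ?thesis using inj by (simp add: inj_on_eq_iff)
    qed (use inner_ne_node in metis)+
  qed
qed

lemma graceful_labeling_join_K1_of_total_labeling:
  assumes "simple_graph V E" and "total_labeling V E \<phi>"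
  shows "graceful_labeling (join_K1_nodes V) (join_K1_edges V E) (case_option 0 \<phi>)"
proof -
  have range: "\<phi> ` V \<subseteq> {1 .. int (card V + card E)}" and inj: "inj_on \<phi> V"
    and distinct: "edge_labels_distinct E \<phi>"
    and disjoint: "\<phi> ` V \<inter> edge_label_set E \<phi> = {}"
    using assms(2) unfolding total_labeling_def by auto
  have pos: "\<forall>w\<in>V. 0 < \<phi> w" using range by fastforce
  have "edge_labels_distinct (join_K1_edges V E) (case_option 0 \<phi>)"
    using inj pos distinct disjoint by (rule edge_labels_distinct_join_K1)
  moreover have "inj_on (case_option 0 \<phi>) (join_K1_nodes V)"
    using inj pos unfolding join_K1_nodes_def inj_on_def by fastforce
  moreover have "case_option 0 \<phi> ` join_K1_nodes V \<subseteq> {0 .. int (card (join_K1_edges V E))}"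
    using range unfolding join_K1_nodes_def card_join_K1_edges[OF assms(1)] by force
  ultimately show ?thesis unfolding graceful_labeling_def by blast
qed

theorem theorem7p3:
  fixes V :: "'a set" and E :: "'a set set"
  assumes "simple_graph V E"
    and "\<not> graceful (join_K1_nodes V) (join_K1_edges V E)"
  shows "\<not> supergraceful V E"
  using assms graceful_labeling_join_K1_of_total_labeling
  unfolding graceful_def supergraceful_def by blast

end
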